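(* Let $G$ be a finite group. For each conjugacy class $[H]\in\overline{P}(G)$ and each $\sigma=(\delta_\sigma,\theta_\sigma)\in\Sigma_{[H]}$ let $\bigl(b_n^{[H]_\sigma}\bigr)_{n=1}^\infty$ be a sequence of non-negative integers, such that $b_1^{[G]_{(1,1)}}\geqslant1$. Define \[ a_n^{[H]_\sigma}=\begin{cases}\theta_\sigma\, b^{[H]_\sigma}_{n/\delta_\sigma}, & \text{if }\delta_\sigma\mid n,\\ 0,&\text{otherwise},\end{cases} \qquad a_n=\sum_{[H]\in\overline{P}(G)}\sum_{\sigma\in\Sigma_{[H]}}a_n^{[H]_\sigma},\qquad b_n=\sum_{[H]\in\overline{P}(G)}\sum_{\sigma\in\Sigma_{[H]}}b_n^{[H]_\sigma}, \] for all $n\geqslant1$. Then there exist a compact metric space $X$, a homeomorphism $T:X\to X$, and a continuous action of $G$ on $X$ commuting with $T$ such that $O_n(T)=a_n$ and $O_n(T')=b_n$ for all $n\geqslant1$, where $(X',T')$ is the quotient system of $(X,T)$ under $G$.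
   Context: $\overline{P}(G)$ is the set of conjugacy classes $[H]=\{gHg^{-1}:g\in G\}$ of subgroups $H\leqslant G$. $N_G(H)=\{g\in G:gHg^{-1}=H\}$. For a finite group $K$, $\Delta(K)=\{|\langle h\rangle|:h\in K\}$. For $[H]\in\overline{P}(G)$ (with a representative $H$), $\Sigma_{[H]}=\{(\delta,\theta):\delta\in\Delta(N_G(H)/H),\ \theta=[G:H]/\delta\}$; in particular $\Sigma_{[G]}=\{(1,1)\}$. The quotient system: $X'=G\backslash X=\{\mathfrak{O}_G(x):x\in X\}$, $\mathfrak{O}_G(x)=\{g(x):g\in G\}$, with metric $d'(\mathfrak{O}_G(x),\mathfrak{O}_G(y))=\min\{d(x',y'):x'\in\mathfrak{O}_G(x),y'\in\mathfrak{O}_G(y)\}$ and $T'(\mathfrak{O}_G(x))=\mathfrak{O}_G(T(x))$. For a map $S$, $O_n(S)$ is the number of closed orbits $\{x,S(x),\dots,S^{n-1}(x)\}$ of cardinality exactly $n$. *)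

theory Defs
  imports "HOL-Analysis.Analysis" "HOL-Algebra.Group_Action" "HOL-Algebra.Multiplicative_Group"
begin

definition subgroup_conj_class :: "('g, 'b) monoid_scheme \<Rightarrow> 'g set \<Rightarrow> 'g set set" where
  "subgroup_conj_class G H = {g <#\<^bsub>G\<^esub> H #>\<^bsub>G\<^esub> inv\<^bsub>G\<^esub> g | g. g \<in> carrier G}"

definition conj_classes_subgroups :: "('g, 'b) monoid_scheme \<Rightarrow> 'g set set set" where
  "conj_classes_subgroups G = {subgroup_conj_class G H | H. subgroup H G}"

definition elem_orders :: "('k, 'c) monoid_scheme \<Rightarrow> nat set" where
  "elem_orders K = {group.ord K h | h. h \<in> carrier K}"

definition subgroup_index :: "('g, 'b) monoid_scheme \<Rightarrow> 'g set \<Rightarrow> nat" where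
  "subgroup_index G H = card (rcosets\<^bsub>G\<^esub> H)"

text \<open>\<open>\<Sigma>_[H]\<close> for a conjugacy class C = [H], computed from a representative H \<in> C
  (the result does not depend on the representative).\<close>
definition Sigma_class :: "('g, 'b) monoid_scheme \<Rightarrow> 'g set set \<Rightarrow> (nat \<times> nat) set" where
  "Sigma_class G C = {(\<delta>, subgroup_index G H div \<delta>) | \<delta> H.
       H \<in> C \<and> \<delta> \<in> elem_orders ((G\<lparr>carrier := normalizer G H\<rparr>) Mod H)}"

text \<open>\<open>O_n(S)\<close> realised as the set of closed orbits of S in A of cardinality exactly n;
  the count is its cardinality (together with finiteness).\<close>
definition closed_orbits :: "('a \<Rightarrow> 'a) \<Rightarrow> 'a set \<Rightarrow> nat \<Rightarrow> 'a set set" where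
  "closed_orbits S A n = {P. \<exists>x\<in>A. (S ^^ n) x = x \<and> P = {(S ^^ k) x | k. k < n} \<and> card P = n}"

definition quotient_map :: "('g, 'b) monoid_scheme \<Rightarrow> ('g \<Rightarrow> 'a \<Rightarrow> 'a) \<Rightarrow> ('a \<Rightarrow> 'a) \<Rightarrow> 'a set \<Rightarrow> 'a set" where
  "quotient_map G \<phi> T Orb = orbit G \<phi> (T (SOME x. x \<in> Orb))"

end

theory Submission
  imports Defs "HOL-Algebra.Zassenhaus"
begin

text \<open>
  The space is a disjoint union of finite blocks, one for every class \<open>[H]\<close>, every
  \<open>\<sigma> = (\<delta>, \<theta>) \<in> \<Sigma>_[H]\<close>, every \<open>n \<ge> 1\<close> and every one of the \<open>b_n^[H]_\<sigma>\<close> copies.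
  Choose a representative \<open>H\<close> and \<open>c \<in> N_G(H)\<close> whose coset has order \<open>\<delta>\<close> in \<open>N_G(H)/H\<close>.
  The block is \<open>H\<setminus>G \<times> {0..n-1}\<close>; \<open>T\<close> advances the level and, when it wraps around,
  multiplies the coset on the left by \<open>c\<close>, while \<open>G\<close> acts by right translation of cosets,
  which commutes with \<open>T\<close>. Every point of the block has exact period \<open>n\<delta>\<close>, so the block
  contributes \<open>[G:H] n / (n\<delta>) = \<theta>\<close> closed orbits of length \<open>n\<delta>\<close>; its \<open>G\<close>-orbits are
  the \<open>n\<close> levels, permuted cyclically by \<open>T'\<close>.

  Giving the points of a block of length \<open>n\<close> the weight \<open>1/(n+1)\<close> and using the
  ultrametric \<open>d(x,y) = max(w x, w y)\<close> makes the space compact, once one point gets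
  weight \<open>0\<close>: this is the fixed point forming the block of \<open>[G]\<close>, \<open>\<sigma> = (1,1)\<close>, \<open>n = 1\<close>,
  which exists because \<open>b_1^[G] \<ge> 1\<close>. Finally the countable space is embedded into the reals.
\<close>

section \<open>Periodic points and closed orbits\<close>

lemma funpow_in_invariant: "R ` A \<subseteq> A \<Longrightarrow> x \<in> A \<Longrightarrow> (R ^^ k) x \<in> A"
  by (induction k) auto

lemma funpow_semiconj:
  assumes "R ` A \<subseteq> A" and "\<And>a. a \<in> A \<Longrightarrow> S (E a) = E (R a)" and "a \<in> A"
  shows "(S ^^ k) (E a) = E ((R ^^ k) a)"
  by (induction k) (simp_all add: assms(2) funpow_in_invariant[OF assms(1,3)])

lemma funpow_commute_apply: "(f ^^ m) ((f ^^ n) x) = (f ^^ n) ((f ^^ m) x)"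
  by (metis add.commute comp_apply funpow_add)

definition prime_period_points :: "('a \<Rightarrow> 'a) \<Rightarrow> 'a set \<Rightarrow> nat \<Rightarrow> 'a set" where
  "prime_period_points R A m = {x \<in> A. \<forall>p. (R ^^ p) x = x \<longleftrightarrow> m dvd p}"

definition cycle_of :: "('a \<Rightarrow> 'a) \<Rightarrow> nat \<Rightarrow> 'a \<Rightarrow> 'a set" where
  "cycle_of R m x = (\<lambda>k. (R ^^ k) x) ` {..<m}"

lemma prime_period_iff_inj_on:
  assumes "(R ^^ m) x = x" and "0 < m"
  shows "(\<forall>p. (R ^^ p) x = x \<longleftrightarrow> m dvd p) \<longleftrightarrow> inj_on (\<lambda>k. (R ^^ k) x) {..<m}"
proof
  assume period: "\<forall>p. (R ^^ p) x = x \<longleftrightarrow> m dvd p"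
  have distinct: "(R ^^ a) x \<noteq> (R ^^ c) x" if "a < c" and "c < m" for a c
  proof
    assume eq: "(R ^^ a) x = (R ^^ c) x"
    have "(R ^^ (m - c + a)) x = (R ^^ (m - c)) ((R ^^ c) x)"
      by (simp add: eq funpow_add)
    also have "\<dots> = (R ^^ (m - c + c)) x"
      by (simp add: funpow_add)
    also have "\<dots> = x"
      using that assms(1) by simp
    finally have "m dvd m - c + a"
      using period by blast
    moreover have "0 < m - c + a" and "m - c + a < m"
      using that by auto
    ultimately show False
      using nat_dvd_not_less by simp
  qed
  show "inj_on (\<lambda>k. (R ^^ k) x) {..<m}"
  proof (rule inj_onI)
    fix a c assume "a \<in> {..<m}" and "c \<in> {..<m}" and "(R ^^ a) x = (R ^^ c) x"
    then show "a = c"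
      using distinct[of a c] distinct[of c a] by (cases a c rule: linorder_cases) auto
  qed
next
  assume inj: "inj_on (\<lambda>k. (R ^^ k) x) {..<m}"
  show "\<forall>p. (R ^^ p) x = x \<longleftrightarrow> m dvd p"
  proof (intro allI iffI)
    fix p assume "(R ^^ p) x = x"
    then have "(R ^^ (p mod m)) x = (R ^^ 0) x"
      using funpow_mod_eq[where f=R and m=p and n=m and x=x] assms(1) by simp
    then have "p mod m = 0"
      by (rule inj_onD[OF inj]) (simp_all add: assms(2))
    then show "m dvd p"
      by (simp add: dvd_eq_mod_eq_0)
  next
    fix p assume "m dvd p"
    then show "(R ^^ p) x = x"
      using funpow_mod_eq[where f=R and m=p and n=m and x=x] assms(1) by simp
  qed
qed

lemma cycle_of_eq_range:
  assumes "(R ^^ m) x = x" and "0 < m"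
  shows "cycle_of R m x = range (\<lambda>k. (R ^^ k) x)"
proof -
  have "(R ^^ k) x \<in> (\<lambda>k. (R ^^ k) x) ` {..<m}" for k
    using funpow_mod_eq[where f=R and m=k and n=m and x=x] assms
    by (intro image_eqI[of _ _ "k mod m"]) simp_all
  then show ?thesis
    unfolding cycle_of_def by (intro equalityI) auto
qed

lemma cycle_of_funpow:
  assumes "(R ^^ m) x = x" and "0 < m"
  shows "cycle_of R m ((R ^^ a) x) = cycle_of R m x"
proof -
  have period: "(R ^^ m) ((R ^^ a) x) = (R ^^ a) x"
    using assms(1) by (metis comp_apply funpow_add add.commute)
  have "(R ^^ k) x = (R ^^ (k + (m - 1) * a)) ((R ^^ a) x)" for k
  proof -
    have "(R ^^ k) x = (R ^^ ((k + m * a) mod m)) x"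
      using funpow_mod_eq[where f=R and m=k and n=m and x=x] assms(1) by simp
    also have "\<dots> = (R ^^ (k + m * a)) x"
      using funpow_mod_eq[where f=R and m="k + m * a" and n=m and x=x] assms(1) by simp
    also have "k + m * a = k + (m - 1) * a + a"
      using assms(2) by (cases m) auto
    finally show ?thesis
      by (simp add: funpow_add)
  qed
  then have "range (\<lambda>k. (R ^^ k) x) \<subseteq> range (\<lambda>k. (R ^^ k) ((R ^^ a) x))"
    by (metis image_subsetI rangeI)
  moreover have "(R ^^ k) ((R ^^ a) x) = (R ^^ (k + a)) x" for k
    by (simp add: funpow_add)
  then have "range (\<lambda>k. (R ^^ k) ((R ^^ a) x)) \<subseteq> range (\<lambda>k. (R ^^ k) x)"
    by auto
  ultimately show ?thesis
    using cycle_of_eq_range[OF assms] cycle_of_eq_range[OF period assms(2)] by simp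
qed

lemma funpow_prime_period_points:
  assumes "R ` A \<subseteq> A" and "0 < m" and x: "x \<in> prime_period_points R A m"
  shows "(R ^^ a) x \<in> prime_period_points R A m"
proof -
  have period: "(R ^^ p) x = x \<longleftrightarrow> m dvd p" for p
    using x unfolding prime_period_points_def by simp
  have "x \<in> A"
    using x unfolding prime_period_points_def by simp
  have x_from_shift: "(R ^^ (m * a - a)) ((R ^^ a) x) = x"
  proof -
    have "(R ^^ (m * a - a)) ((R ^^ a) x) = (R ^^ (m * a - a + a)) x"
      by (simp add: funpow_add)
    also have "m * a - a + a = m * a"
      using assms(2) by simp
    finally show ?thesis
      using period by simp
  qed
  have "(R ^^ p) ((R ^^ a) x) = (R ^^ a) x \<longleftrightarrow> m dvd p" for p
  proof
    assume fixed: "(R ^^ p) ((R ^^ a) x) = (R ^^ a) x"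
    have "(R ^^ p) x = (R ^^ p) ((R ^^ (m * a - a)) ((R ^^ a) x))"
      by (simp only: x_from_shift)
    also have "\<dots> = (R ^^ (m * a - a)) ((R ^^ p) ((R ^^ a) x))"
      by (rule funpow_commute_apply)
    also have "\<dots> = x"
      by (simp only: fixed x_from_shift)
    finally show "m dvd p"
      using period by blast
  next
    assume "m dvd p"
    then have "(R ^^ p) x = x"
      using period by blast
    then show "(R ^^ p) ((R ^^ a) x) = (R ^^ a) x"
      by (metis funpow_commute_apply)
  qed
  moreover have "(R ^^ a) x \<in> A"
    using funpow_in_invariant[OF assms(1) \<open>x \<in> A\<close>] .
  ultimately show ?thesis
    unfolding prime_period_points_def by simp
qed

lemma cycle_of_conv: "cycle_of R m x = {(R ^^ k) x | k. k < m}"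
  unfolding cycle_of_def by auto

lemma closed_orbits_conv:
  "closed_orbits R A m = cycle_of R m ` {x \<in> A. (R ^^ m) x = x \<and> card (cycle_of R m x) = m}"
  unfolding closed_orbits_def cycle_of_conv by auto

lemma card_cycle_of_iff_inj_on: "card (cycle_of R m x) = m \<longleftrightarrow> inj_on (\<lambda>k. (R ^^ k) x) {..<m}"
proof
  assume "card (cycle_of R m x) = m"
  then show "inj_on (\<lambda>k. (R ^^ k) x) {..<m}"
    unfolding cycle_of_def by (intro eq_card_imp_inj_on) simp_all
qed (simp add: cycle_of_def card_image)

lemma prime_period_points_eq:
  assumes "0 < m"
  shows "prime_period_points R A m = {x \<in> A. (R ^^ m) x = x \<and> card (cycle_of R m x) = m}"
proof (intro equalityI subsetI)
  fix x assume x: "x \<in> prime_period_points R A m"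
  then have "(R ^^ m) x = x"
    unfolding prime_period_points_def by simp
  then show "x \<in> {x \<in> A. (R ^^ m) x = x \<and> card (cycle_of R m x) = m}"
    using x prime_period_iff_inj_on[where R=R and m=m and x=x] assms
    unfolding prime_period_points_def card_cycle_of_iff_inj_on by simp
next
  fix x assume "x \<in> {x \<in> A. (R ^^ m) x = x \<and> card (cycle_of R m x) = m}"
  then show "x \<in> prime_period_points R A m"
    using prime_period_iff_inj_on[where R=R and m=m and x=x] assms
    unfolding prime_period_points_def card_cycle_of_iff_inj_on by simp
qed

lemma closed_orbits_eq_cycles:
  assumes "0 < m"
  shows "closed_orbits R A m = cycle_of R m ` prime_period_points R A m"
  unfolding closed_orbits_conv prime_period_points_eq[OF assms] ..

lemma card_closed_orbits:
  assumes "R ` A \<subseteq> A" and "0 < m" and finite: "finite (prime_period_points R A m)"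
  shows "finite (closed_orbits R A m)"
    and "m * card (closed_orbits R A m) = card (prime_period_points R A m)"
proof -
  let ?P = "prime_period_points R A m"
  have cycles: "closed_orbits R A m = cycle_of R m ` ?P"
    using closed_orbits_eq_cycles[OF assms(2)] .
  show "finite (closed_orbits R A m)"
    unfolding cycles using finite by simp
  have periodic: "(R ^^ m) x = x" if "x \<in> ?P" for x
    using that unfolding prime_period_points_def by simp
  have union: "\<Union> (cycle_of R m ` ?P) = ?P"
  proof (intro equalityI subsetI)
    fix y assume "y \<in> \<Union> (cycle_of R m ` ?P)"
    then show "y \<in> ?P"
      unfolding cycle_of_def using funpow_prime_period_points[OF assms(1,2)] by auto
  next
    fix x assume "x \<in> ?P"
    moreover have "x \<in> cycle_of R m x"
      unfolding cycle_of_def using assms(2) by (auto intro: image_eqI[of _ _ 0])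
    ultimately show "x \<in> \<Union> (cycle_of R m ` ?P)"
      by auto
  qed
  have disjoint: "c1 \<inter> c2 = {}"
    if c1: "c1 \<in> cycle_of R m ` ?P" and c2: "c2 \<in> cycle_of R m ` ?P" and "c1 \<noteq> c2" for c1 c2
  proof (rule ccontr)
    obtain x1 x2 where x: "x1 \<in> ?P" "x2 \<in> ?P" and c: "c1 = cycle_of R m x1" "c2 = cycle_of R m x2"
      using c1 c2 by blast
    assume "c1 \<inter> c2 \<noteq> {}"
    then obtain a1 a2 where "(R ^^ a1) x1 = (R ^^ a2) x2"
      unfolding c cycle_of_def by blast
    then have "cycle_of R m x1 = cycle_of R m x2"
      using cycle_of_funpow[OF periodic[OF x(1)] assms(2), of a1]
        cycle_of_funpow[OF periodic[OF x(2)] assms(2), of a2] by simp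
    then show False
      using \<open>c1 \<noteq> c2\<close> c by simp
  qed
  have "m * card (cycle_of R m ` ?P) = card (\<Union> (cycle_of R m ` ?P))"
  proof (rule card_partition)
    show "c \<in> cycle_of R m ` ?P \<Longrightarrow> card c = m" for c
      unfolding prime_period_points_eq[OF assms(2)] by auto
  qed (use finite union disjoint in auto)
  then show "m * card (closed_orbits R A m) = card ?P"
    unfolding cycles union .
qed

lemma closed_orbits_conj:
  assumes bij: "bij_betw E A B" and "R ` A \<subseteq> A" and conj: "\<And>a. a \<in> A \<Longrightarrow> S (E a) = E (R a)"
  shows "closed_orbits S B m = image E ` closed_orbits R A m"
proof -
  have inj: "inj_on E A" and B: "B = E ` A"
    using bij unfolding bij_betw_def by auto
  have cycle: "cycle_of S m (E x) = E ` cycle_of R m x" if "x \<in> A" for x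
    unfolding cycle_of_def image_image using funpow_semiconj[where R=R and S=S and E=E, OF assms(2) conj that] by simp
  have cycle_sub: "cycle_of R m x \<subseteq> A" if "x \<in> A" for x
    unfolding cycle_of_def using funpow_in_invariant[OF assms(2) that] by auto
  have fixed: "(S ^^ m) (E x) = E x \<longleftrightarrow> (R ^^ m) x = x" if "x \<in> A" for x
    using funpow_semiconj[where R=R and S=S and E=E, OF assms(2) conj that] inj_on_eq_iff[OF inj funpow_in_invariant[OF assms(2) that] that]
    by simp
  have card: "card (E ` cycle_of R m x) = card (cycle_of R m x)" if "x \<in> A" for x
    using card_image[OF inj_on_subset[OF inj cycle_sub[OF that]]] .
  have "{y \<in> E ` A. (S ^^ m) y = y \<and> card (cycle_of S m y) = m}
      = E ` {x \<in> A. (R ^^ m) x = x \<and> card (cycle_of R m x) = m}"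
    by (auto simp: fixed cycle card)
  then have "closed_orbits S B m
      = (\<lambda>x. cycle_of S m (E x)) ` {x \<in> A. (R ^^ m) x = x \<and> card (cycle_of R m x) = m}"
    unfolding closed_orbits_conv B by (simp add: image_image)
  also have "\<dots> = image E ` closed_orbits R A m"
    unfolding closed_orbits_conv image_image by (rule image_cong) (simp_all add: cycle)
  finally show ?thesis .
qed

lemma card_closed_orbits_conj:
  assumes "bij_betw E A B" and "R ` A \<subseteq> A" and "\<And>a. a \<in> A \<Longrightarrow> S (E a) = E (R a)"
  shows "card (closed_orbits S B m) = card (closed_orbits R A m)"
proof -
  have "\<Union> (closed_orbits R A m) \<subseteq> A"
    unfolding closed_orbits_conv cycle_of_def using funpow_in_invariant[OF assms(2)] by auto
  then have "inj_on (image E) (closed_orbits R A m)"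
    using assms(1) unfolding bij_betw_def by (meson inj_on_image inj_on_subset)
  then show ?thesis
    using closed_orbits_conj[OF assms] card_image by metis
qed

section \<open>The ultrametric of a weight function\<close>

definition weight_dist :: "('a \<Rightarrow> real) \<Rightarrow> 'a \<Rightarrow> 'a \<Rightarrow> real" where
  "weight_dist w x y = (if x = y then 0 else max (w x) (w y))"

lemma Metric_space_weight_dist:
  assumes nonneg: "\<And>x. 0 \<le> w x"
    and unique_zero: "\<And>x y. x \<in> X \<Longrightarrow> y \<in> X \<Longrightarrow> w x = 0 \<Longrightarrow> w y = 0 \<Longrightarrow> x = y"
  shows "Metric_space X (weight_dist w)"
proof
  fix x y z
  show "0 \<le> weight_dist w x y"
    using nonneg[of x] by (simp add: weight_dist_def le_max_iff_disj)
  show "weight_dist w x y = weight_dist w y x"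
    by (simp add: weight_dist_def max.commute)
  show "weight_dist w x z \<le> weight_dist w x y + weight_dist w y z"
    using nonneg[of x] nonneg[of y] nonneg[of z] by (auto simp: weight_dist_def max_def)
  assume "x \<in> X" and "y \<in> X"
  then show "weight_dist w x y = 0 \<longleftrightarrow> x = y"
    using unique_zero[of x y] nonneg[of x] nonneg[of y] by (auto simp: weight_dist_def max_def)
qed

lemma compact_space_weight_dist:
  assumes metric: "Metric_space X (weight_dist w)" and nonneg: "\<And>x. 0 \<le> w x"
    and "p \<in> X" and "w p = 0"
    and finite_heavy: "\<And>e. 0 < e \<Longrightarrow> finite {x \<in> X. e \<le> w x}"
  shows "compact_space (Metric_space.mtopology X (weight_dist w))"
proof -
  interpret Metric_space X "weight_dist w"
    by (fact metric)
  show ?thesis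
    unfolding compact_space_def compactin_def
  proof (intro conjI allI impI)
    fix \<U> assume \<U>: "(\<forall>U\<in>\<U>. openin mtopology U) \<and> topspace mtopology \<subseteq> \<Union>\<U>"
    then obtain U0 where "U0 \<in> \<U>" and "p \<in> U0"
      using \<open>p \<in> X\<close> by auto
    then obtain r where "0 < r" and "mball p r \<subseteq> U0"
      using \<U> \<open>p \<in> X\<close> unfolding openin_mtopology by blast
    \<comment> \<open>\<open>d p x = w x\<close> for \<open>x \<noteq> p\<close>, so all points of weight below \<open>r\<close> lie in the ball\<close>
    then have light: "{x \<in> X. w x < r} \<subseteq> U0"
      using \<open>p \<in> X\<close> \<open>w p = 0\<close> nonneg by (auto simp: mball_def weight_dist_def max_def)
    have "\<forall>x\<in>{x \<in> X. r \<le> w x}. \<exists>U. U \<in> \<U> \<and> x \<in> U"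
      using \<U> by auto
    then obtain cover where cover: "\<forall>x\<in>{x \<in> X. r \<le> w x}. cover x \<in> \<U> \<and> x \<in> cover x"
      by metis
    let ?\<F> = "insert U0 (cover ` {x \<in> X. r \<le> w x})"
    have "topspace mtopology \<subseteq> \<Union>?\<F>"
      using light cover by (auto simp: not_le[symmetric])
    moreover have "finite ?\<F>"
      using finite_heavy[OF \<open>0 < r\<close>] by simp
    moreover have "?\<F> \<subseteq> \<U>"
      using cover \<open>U0 \<in> \<U>\<close> by auto
    ultimately show "\<exists>\<F>. finite \<F> \<and> \<F> \<subseteq> \<U> \<and> topspace mtopology \<subseteq> \<Union>\<F>"
      by blast
  qed simp
qed

lemma continuous_map_weight_dist:
  assumes metric: "Metric_space X (weight_dist w)"
    and "\<And>x. x \<in> X \<Longrightarrow> F x \<in> X" and "\<And>x. x \<in> X \<Longrightarrow> w (F x) = w x"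
  shows "continuous_map (Metric_space.mtopology X (weight_dist w)) (Metric_space.mtopology X (weight_dist w)) F"
proof -
  have "weight_dist w (F x) (F y) \<le> weight_dist w x y" if "x \<in> X" and "y \<in> X" for x y
    using assms(3)[OF that(1)] assms(3)[OF that(2)] Metric_space.nonneg[OF metric, of x y]
    by (auto simp: weight_dist_def)
  then show ?thesis
    unfolding Metric_space.metric_continuous_map[OF metric metric] using assms(2)
    by (meson image_subsetI le_less_trans)
qed

lemma homeomorphic_map_weight_dist:
  assumes metric: "Metric_space X (weight_dist w)"
    and bij: "bij_betw F X X" and "\<And>x. x \<in> X \<Longrightarrow> w (F x) = w x"
  shows "homeomorphic_map (Metric_space.mtopology X (weight_dist w)) (Metric_space.mtopology X (weight_dist w)) F"
proof -
  let ?G = "inv_into X F"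
  have G: "?G x \<in> X" "F (?G x) = x" "w (?G x) = w x" if "x \<in> X" for x
    using that bij assms(3)[of "?G x"] by (auto simp: bij_betw_def inv_into_into f_inv_into_f)
  have "homeomorphic_maps (Metric_space.mtopology X (weight_dist w)) (Metric_space.mtopology X (weight_dist w)) F ?G"
    unfolding homeomorphic_maps_def Metric_space.topspace_mtopology[OF metric]
    using continuous_map_weight_dist[OF metric] G bij assms(3)
    by (auto simp: bij_betw_def inv_into_f_f bij_betw_apply)
  then show ?thesis
    using homeomorphic_map_maps by blast
qed

section \<open>Periodic bijections and group actions\<close>

lemma bij_betw_periodic:
  assumes "R ` A \<subseteq> A" and periodic: "\<And>x. x \<in> A \<Longrightarrow> \<exists>p>0. (R ^^ p) x = x"
  shows "bij_betw R A A"
proof (rule bij_betw_imageI)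
  show "inj_on R A"
  proof (rule inj_onI)
    fix x y assume "x \<in> A" "y \<in> A" and eq: "R x = R y"
    obtain p q where "0 < p" "(R ^^ p) x = x" "0 < q" "(R ^^ q) y = y"
      using periodic \<open>x \<in> A\<close> \<open>y \<in> A\<close> by metis
    \<comment> \<open>p * q is a common period\<close>
    then have "(R ^^ (p * q)) x = x" "(R ^^ (p * q)) y = y"
      using funpow_mod_eq[where f=R and m="p * q" and n=p and x=x]
        funpow_mod_eq[where f=R and m="p * q" and n=q and x=y] by simp_all
    moreover obtain k where "p * q = Suc k"
      using \<open>0 < p\<close> \<open>0 < q\<close> not0_implies_Suc by fastforce
    ultimately show "x = y"
      using eq by (metis comp_apply funpow_Suc_right)
  qed
  show "R ` A = A"
  proof (intro equalityI subsetI)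
    fix x assume "x \<in> A"
    then obtain p where "0 < p" "(R ^^ p) x = x"
      using periodic by blast
    then have "x = R ((R ^^ (p - 1)) x)"
      by (metis Suc_diff_1 funpow.simps(2) comp_apply)
    then show "x \<in> R ` A"
      using funpow_in_invariant[OF assms(1) \<open>x \<in> A\<close>] by blast
  qed (use assms(1) in blast)
qed

lemma (in group) group_action_intro:
  assumes closed: "\<And>g x. g \<in> carrier G \<Longrightarrow> x \<in> E \<Longrightarrow> \<phi> g x \<in> E"
    and extensional: "\<And>g. g \<in> carrier G \<Longrightarrow> \<phi> g \<in> extensional E"
    and one: "\<And>x. x \<in> E \<Longrightarrow> \<phi> \<one> x = x"
    and mult: "\<And>g h x. g \<in> carrier G \<Longrightarrow> h \<in> carrier G \<Longrightarrow> x \<in> E \<Longrightarrow> \<phi> (g \<otimes> h) x = \<phi> g (\<phi> h x)"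
  shows "group_action G E \<phi>"
proof -
  have inverse: "\<phi> (inv g) (\<phi> g x) = x" if "g \<in> carrier G" "x \<in> E" for g x
    using that mult[of "inv g" g x] one by simp
  have Bij: "\<phi> g \<in> Bij E" if g: "g \<in> carrier G" for g
  proof -
    have "bij_betw (\<phi> g) E E"
      by (rule bij_betw_byWitness[where f'="\<phi> (inv g)"])
        (use g closed inverse[of g] inverse[of "inv g"] in auto)
    then show ?thesis
      using extensional[OF g] unfolding Bij_def by simp
  qed
  have "\<phi> (g \<otimes> h) = \<phi> g \<otimes>\<^bsub>BijGroup E\<^esub> \<phi> h" if "g \<in> carrier G" "h \<in> carrier G" for g h
  proof -
    have "\<phi> (g \<otimes> h) = compose E (\<phi> g) (\<phi> h)"
      using that extensional[of "g \<otimes> h"] mult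
      by (intro extensionalityI[where A=E]) (auto simp: compose_def)
    then show ?thesis
      using that Bij unfolding BijGroup_def by simp
  qed
  then show ?thesis
    unfolding group_action_def group_hom_def group_hom_axioms_def hom_def
    using Bij is_group group_BijGroup by (auto simp: BijGroup_def)
qed

lemma (in group_action) orbit_action:
  assumes "g \<in> carrier G" and "x \<in> E"
  shows "orbit G \<phi> (\<phi> g x) = orbit G \<phi> x"
proof -
  interpret group G
    using group_hom group_hom.axioms(1) by auto
  have mem: "\<phi> h y \<in> orbit G \<phi> y" if "h \<in> carrier G" for h y
    using that unfolding orbit_def by blast
  show ?thesis
  proof (intro equalityI subsetI)
    fix y assume "y \<in> orbit G \<phi> (\<phi> g x)"
    then obtain h where h: "h \<in> carrier G" and "y = \<phi> h (\<phi> g x)"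
      unfolding orbit_def by blast
    then have "y = \<phi> (h \<otimes> g) x"
      using composition_rule assms by simp
    then show "y \<in> orbit G \<phi> x"
      using mem[of "h \<otimes> g" x] h assms(1) by simp
  next
    fix y assume "y \<in> orbit G \<phi> x"
    then obtain h where h: "h \<in> carrier G" and "y = \<phi> h x"
      unfolding orbit_def by blast
    then have "y = \<phi> (h \<otimes> inv g) (\<phi> g x)"
      using composition_rule[of "\<phi> g x" h "inv g"] element_image[OF assms refl]
        orbit_sym_aux[OF assms refl] assms(1) by simp
    then show "y \<in> orbit G \<phi> (\<phi> g x)"
      using mem[of "h \<otimes> inv g" "\<phi> g x"] h assms(1) by simp
  qed
qed

lemma (in group_action) quotient_map_orbit:
  assumes "\<And>x. x \<in> E \<Longrightarrow> T x \<in> E"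
    and commute: "\<And>g x. g \<in> carrier G \<Longrightarrow> x \<in> E \<Longrightarrow> \<phi> g (T x) = T (\<phi> g x)"
    and "x \<in> E"
  shows "quotient_map G \<phi> T (orbit G \<phi> x) = orbit G \<phi> (T x)"
proof -
  have "(SOME y. y \<in> orbit G \<phi> x) \<in> orbit G \<phi> x"
    using orbit_refl[OF \<open>x \<in> E\<close>] by (rule someI)
  then obtain g where g: "g \<in> carrier G" and "(SOME y. y \<in> orbit G \<phi> x) = \<phi> g x"
    unfolding orbit_def by blast
  then have "quotient_map G \<phi> T (orbit G \<phi> x) = orbit G \<phi> (\<phi> g (T x))"
    unfolding quotient_map_def using commute \<open>x \<in> E\<close> by simp
  then show ?thesis
    using orbit_action[OF g assms(1)[OF \<open>x \<in> E\<close>]] by simp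
qed

section \<open>Normalizers and Weyl groups\<close>

abbreviation weyl_group :: "('g, 'b) monoid_scheme \<Rightarrow> 'g set \<Rightarrow> 'g set monoid" where
  "weyl_group G H \<equiv> (G\<lparr>carrier := normalizer G H\<rparr>) Mod H"

context group
begin

lemma normalizer_subset_carrier: "normalizer G H \<subseteq> carrier G"
  unfolding normalizer_def stabilizer_def by auto

lemma l_coset_eq_r_coset_normalizer:
  assumes H: "subgroup H G" and c: "c \<in> normalizer G H"
  shows "c <# H = H #> c"
proof -
  have HG: "H \<subseteq> carrier G"
    using subgroup.subset[OF H] .
  have cG: "c \<in> carrier G" and conj: "c <# H #> inv c = H"
    using c HG unfolding normalizer_def stabilizer_def by auto
  have "(c <# H #> inv c) #> c = c <# H #> (inv c \<otimes> c)"
    by (rule coset_mult_assoc) (auto simp: cG HG l_coset_subset_G)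
  also have "\<dots> = c <# H"
    using cG HG by (simp add: l_coset_subset_G)
  finally show ?thesis
    using conj by simp
qed

lemma normalizer_pow_closed:
  assumes "subgroup H G" and "c \<in> normalizer G H"
  shows "c [^] (q::nat) \<in> normalizer G H"
proof -
  interpret N: subgroup "normalizer G H" G
    using normalizer_imp_subgroup[OF subgroup.subset[OF assms(1)]] .
  show ?thesis
    by (induction q) (simp_all add: assms(2))
qed

lemma normalizer_l_coset_r_coset:
  assumes H: "subgroup H G" and c: "c \<in> normalizer G H" and g: "g \<in> carrier G"
  shows "c <# (H #> g) = H #> (c \<otimes> g)"
proof -
  have HG: "H \<subseteq> carrier G"
    using subgroup.subset[OF H] .
  have cG: "c \<in> carrier G"
    using c normalizer_subset_carrier by auto
  have "c <# (H #> g) = (c <# H) #> g"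
    using coset_assoc cG g HG by blast
  also have "\<dots> = H #> (c \<otimes> g)"
    using l_coset_eq_r_coset_normalizer[OF H c] coset_mult_assoc HG cG g by simp
  finally show ?thesis .
qed

lemma r_coset_eq_iff:
  assumes H: "subgroup H G" and a: "a \<in> carrier G" and g: "g \<in> carrier G"
  shows "H #> a = H #> g \<longleftrightarrow> a \<otimes> inv g \<in> H"
proof
  have HG: "H \<subseteq> carrier G"
    using subgroup.subset[OF H] .
  assume "H #> a = H #> g"
  then have "H #> (a \<otimes> inv g) = H"
    using coset_mult_inv2 a g HG by blast
  then show "a \<otimes> inv g \<in> H"
    using coset_join1 H a g by blast
next
  have HG: "H \<subseteq> carrier G"
    using subgroup.subset[OF H] .
  assume "a \<otimes> inv g \<in> H"
  then have "H #> (a \<otimes> inv g) = H"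
    using coset_join2 H a g by blast
  then show "H #> a = H #> g"
    using coset_mult_inv1 a g HG by blast
qed

lemma normalizer_l_coset_fixes_iff:
  assumes H: "subgroup H G" and c: "c \<in> normalizer G H" and g: "g \<in> carrier G"
  shows "c <# (H #> g) = H #> g \<longleftrightarrow> c \<in> H"
proof -
  have cG: "c \<in> carrier G"
    using c normalizer_subset_carrier by auto
  have "c <# (H #> g) = H #> g \<longleftrightarrow> H #> (c \<otimes> g) = H #> g"
    using normalizer_l_coset_r_coset[OF H c g] by simp
  also have "\<dots> \<longleftrightarrow> c \<otimes> g \<otimes> inv g \<in> H"
    using r_coset_eq_iff[OF H] cG g by simp
  also have "c \<otimes> g \<otimes> inv g = c"
    using cG g by (simp add: m_assoc)
  finally show ?thesis .
qed

lemma pow_mem_iff_weyl_ord_dvd: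
  assumes H: "subgroup H G" and c: "c \<in> normalizer G H"
  shows "c [^] (q::nat) \<in> H \<longleftrightarrow> group.ord (weyl_group G H) (H #> c) dvd q"
proof -
  let ?N = "G\<lparr>carrier := normalizer G H\<rparr>"
  interpret N: normal H ?N
    using subgroup_in_normalizer[OF H] .
  interpret W: group "weyl_group G H"
    using N.factorgroup_is_group .
  have cN: "c \<in> carrier ?N"
    using c by simp
  have cG: "c \<in> carrier G"
    using c normalizer_subset_carrier by auto
  have "H #> c \<in> carrier (weyl_group G H)"
    using cN unfolding FactGroup_def RCOSETS_def by auto
  have pow: "(H #> c) [^]\<^bsub>weyl_group G H\<^esub> q = H #> (c [^] q)"
    using N.FactGroup_pow[OF cN, of q] nat_pow_consistent[of c q "normalizer G H"] by simp
  have "c [^] q \<in> H \<longleftrightarrow> H #> (c [^] q) = H"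
    using coset_join1[of H "c [^] q"] coset_join2[of "c [^] q" H] H cG by auto
  also have "\<dots> \<longleftrightarrow> (H #> c) [^]\<^bsub>weyl_group G H\<^esub> q = \<one>\<^bsub>weyl_group G H\<^esub>"
    using pow by simp
  also have "\<dots> \<longleftrightarrow> W.ord (H #> c) dvd q"
    using W.pow_eq_id[OF \<open>H #> c \<in> carrier (weyl_group G H)\<close>] .
  finally show ?thesis .
qed

lemma card_rcosets_normalizer_mult:
  assumes fin: "finite (carrier G)" and H: "subgroup H G"
  shows "card (rcosets H) = card (rcosets (normalizer G H)) * order (weyl_group G H)"
proof -
  let ?N = "G\<lparr>carrier := normalizer G H\<rparr>"
  interpret N: normal H ?N
    using subgroup_in_normalizer[OF H] .
  have N: "subgroup (normalizer G H) G"
    using normalizer_imp_subgroup[OF subgroup.subset[OF H]] .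
  have "card (rcosets\<^bsub>?N\<^esub> H) * card H = card (normalizer G H)"
    using N.lagrange[OF N.subgroup_axioms] unfolding order_def by simp
  moreover have "card (rcosets H) * card H = card (carrier G)"
    using lagrange[OF H] unfolding order_def .
  moreover have "card (rcosets (normalizer G H)) * card (normalizer G H) = card (carrier G)"
    using lagrange[OF N] unfolding order_def .
  moreover have "card H > 0"
    using subgroup.one_closed[OF H] fin subgroup.subset[OF H] card_gt_0_iff finite_subset by blast
  ultimately have "card (rcosets H) = card (rcosets (normalizer G H)) * card (rcosets\<^bsub>?N\<^esub> H)"
    by (metis mult.assoc mult_right_cancel not_gr0)
  then show ?thesis
    unfolding order_def FactGroup_def by simp
qed

lemma weyl_ord:
  assumes fin: "finite (carrier G)" and H: "subgroup H G" and c: "c \<in> normalizer G H"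
  shows "1 \<le> group.ord (weyl_group G H) (H #> c)"
    and "group.ord (weyl_group G H) (H #> c) dvd subgroup_index G H"
proof -
  interpret N: normal H "G\<lparr>carrier := normalizer G H\<rparr>"
    using subgroup_in_normalizer[OF H] .
  interpret W: group "weyl_group G H"
    using N.factorgroup_is_group .
  have coset: "H #> c \<in> carrier (weyl_group G H)"
    using c unfolding FactGroup_def RCOSETS_def by auto
  have "finite (normalizer G H)"
    using fin normalizer_subset_carrier finite_subset by blast
  then have "finite (carrier (weyl_group G H))"
    unfolding FactGroup_def RCOSETS_def by simp
  then show "1 \<le> W.ord (H #> c)"
    using W.ord_ge_1[OF _ coset] by simp
  show "W.ord (H #> c) dvd subgroup_index G H"
    using W.ord_dvd_group_order[OF coset] card_rcosets_normalizer_mult[OF fin H]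
    unfolding subgroup_index_def by simp
qed

lemma rcosets_subset_carrier: "subgroup H G \<Longrightarrow> S \<in> rcosets H \<Longrightarrow> S \<subseteq> carrier G"
  using subgroup.rcosets_carrier is_group by blast

lemma rcosets_right_translates:
  assumes H: "subgroup H G" and S: "S \<in> rcosets H"
  shows "(\<lambda>g. S #> inv g) ` carrier G = rcosets H"
proof -
  have HG: "H \<subseteq> carrier G"
    using subgroup.subset[OF H] .
  obtain a where a: "a \<in> carrier G" "S = H #> a"
    using S unfolding RCOSETS_def by auto
  show ?thesis
  proof (intro equalityI subsetI)
    fix T assume "T \<in> (\<lambda>g. S #> inv g) ` carrier G"
    then obtain g where g: "g \<in> carrier G" "T = S #> inv g"
      by auto
    then have "T = H #> (a \<otimes> inv g)"
      using coset_mult_assoc[OF HG] a by simp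
    then show "T \<in> rcosets H"
      using rcosetsI[OF HG] a g by simp
  next
    fix T assume "T \<in> rcosets H"
    then obtain t where t: "t \<in> carrier G" "T = H #> t"
      unfolding RCOSETS_def by auto
    have "S #> inv (inv t \<otimes> a) = H #> (a \<otimes> (inv a \<otimes> t))"
      using coset_mult_assoc[OF HG] a t by (simp add: inv_mult_group)
    also have "a \<otimes> (inv a \<otimes> t) = t"
      using a t by (simp add: m_assoc[symmetric])
    finally show "T \<in> (\<lambda>g. S #> inv g) ` carrier G"
      using a t by force
  qed
qed

lemma subgroup_conj_class_carrier: "subgroup_conj_class G (carrier G) = {carrier G}"
proof -
  have "g <# carrier G #> inv g = carrier G" if "g \<in> carrier G" for g
    using that coset_join3[OF that subgroup_self] coset_join2[OF _ subgroup_self] by simp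
  then show ?thesis
    unfolding subgroup_conj_class_def by auto
qed

lemma rcosets_carrier: "rcosets (carrier G) = {carrier G}"
  unfolding RCOSETS_def using coset_join2[OF _ subgroup_self] by auto

end


section \<open>The model system\<close>

lemma sum_Sigma_pairs:
  "finite A \<Longrightarrow> (\<And>a. a \<in> A \<Longrightarrow> finite (B a)) \<Longrightarrow> sum f (Sigma A B) = (\<Sum>a\<in>A. \<Sum>b\<in>B a. f (a, b))"
  by (subst sum.Sigma) auto

text \<open>The block \<open>(C, \<sigma>, n, j)\<close> is the \<open>j\<close>-th of the \<open>b C \<sigma> n\<close> blocks of length \<open>n\<close> for \<open>C\<close> and \<open>\<sigma>\<close>;
  its points are triples (block, right coset, level).\<close>

type_synonym 'g block = "'g set set \<times> (nat \<times> nat) \<times> nat \<times> nat"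
type_synonym 'g point = "'g block \<times> 'g set \<times> nat"

locale periodic_realization = group G for G :: "('g, 'b) monoid_scheme" (structure) +
  fixes b :: "'g set set \<Rightarrow> nat \<times> nat \<Rightarrow> nat \<Rightarrow> nat"
  assumes finite_carrier: "finite (carrier G)"
    and fixed_point_count: "1 \<le> b (subgroup_conj_class G (carrier G)) (1, 1) 1"
begin

abbreviation subgroup_classes :: "'g set set set" where
  "subgroup_classes \<equiv> conj_classes_subgroups G"

lemma subgroup_of_class:
  assumes "C \<in> subgroup_classes" and "H \<in> C"
  shows "subgroup H G"
proof -
  obtain H0 where "subgroup H0 G" and "C = subgroup_conj_class G H0"
    using assms(1) unfolding conj_classes_subgroups_def by auto
  then show ?thesis
    using assms(2) subgroup_conjugation_is_surj2 unfolding subgroup_conj_class_def by auto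
qed

lemma finite_classes: "finite subgroup_classes"
proof -
  have "subgroup_classes = subgroup_conj_class G ` {H. subgroup H G}"
    unfolding conj_classes_subgroups_def by auto
  moreover have "{H. subgroup H G} \<subseteq> Pow (carrier G)"
    using subgroup.subset by auto
  ultimately show ?thesis
    using finite_carrier by (metis finite_Pow_iff finite_imageI finite_subset)
qed

lemma finite_class:
  assumes "C \<in> subgroup_classes"
  shows "finite C"
proof -
  obtain H0 where "C = subgroup_conj_class G H0"
    using assms unfolding conj_classes_subgroups_def by blast
  then have "C = (\<lambda>g. g <# H0 #> inv g) ` carrier G"
    unfolding subgroup_conj_class_def by auto
  then show ?thesis
    using finite_carrier by simp
qed

lemma finite_Sigma_class:
  assumes "C \<in> subgroup_classes"
  shows "finite (Sigma_class G C)"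
proof -
  have "finite (carrier (weyl_group G H))" for H
    using finite_subset[OF normalizer_subset_carrier finite_carrier]
    unfolding FactGroup_def RCOSETS_def by simp
  then have "finite (elem_orders (weyl_group G H))" for H
    unfolding elem_orders_def Setcompr_eq_image by simp
  moreover have "Sigma_class G C
      \<subseteq> (\<Union>H\<in>C. (\<lambda>\<delta>. (\<delta>, subgroup_index G H div \<delta>)) ` elem_orders (weyl_group G H))"
    unfolding Sigma_class_def by auto
  ultimately show ?thesis
    using finite_class[OF assms] by (simp add: finite_subset)
qed

definition represents :: "'g set set \<Rightarrow> nat \<times> nat \<Rightarrow> 'g set \<times> 'g \<Rightarrow> bool" where
  "represents C \<sigma> p \<longleftrightarrow> fst p \<in> C \<and> subgroup (fst p) G \<and> snd p \<in> normalizer G (fst p) \<and>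
     fst \<sigma> = group.ord (weyl_group G (fst p)) (fst p #> snd p) \<and>
     snd \<sigma> = subgroup_index G (fst p) div fst \<sigma>"

lemma Sigma_class_represented:
  assumes C: "C \<in> subgroup_classes" and \<sigma>: "\<sigma> \<in> Sigma_class G C"
  shows "represents C \<sigma> (SOME p. represents C \<sigma> p)"
proof -
  obtain \<delta> H where "\<sigma> = (\<delta>, subgroup_index G H div \<delta>)" and "H \<in> C"
    and "\<delta> \<in> elem_orders (weyl_group G H)"
    using \<sigma> unfolding Sigma_class_def by auto
  moreover obtain X where "X \<in> carrier (weyl_group G H)" and "\<delta> = group.ord (weyl_group G H) X"
    using \<open>\<delta> \<in> elem_orders _\<close> unfolding elem_orders_def by auto
  moreover obtain c where "c \<in> normalizer G H" and "X = H #> c"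
    using \<open>X \<in> carrier _\<close> unfolding FactGroup_def RCOSETS_def by auto
  ultimately have "represents C \<sigma> (H, c)"
    unfolding represents_def using subgroup_of_class[OF C] by simp
  then show ?thesis
    by (rule someI)
qed

definition blocks :: "'g block set" where
  "blocks = (SIGMA C:subgroup_classes. SIGMA \<sigma>:Sigma_class G C. SIGMA n:{1..}. {..<b C \<sigma> n})"

definition block_sigma :: "'g block \<Rightarrow> nat \<times> nat" where
  "block_sigma i = fst (snd i)"

definition block_length :: "'g block \<Rightarrow> nat" where
  "block_length i = fst (snd (snd i))"

definition block_rep :: "'g block \<Rightarrow> 'g set \<times> 'g" where
  "block_rep i = (SOME p. represents (fst i) (block_sigma i) p)"

abbreviation block_subgroup :: "'g block \<Rightarrow> 'g set" where
  "block_subgroup i \<equiv> fst (block_rep i)"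

abbreviation block_shift :: "'g block \<Rightarrow> 'g" where
  "block_shift i \<equiv> snd (block_rep i)"

abbreviation block_period :: "'g block \<Rightarrow> nat" where
  "block_period i \<equiv> block_length i * fst (block_sigma i)"

lemma
  assumes "i \<in> blocks"
  shows subgroup_block_subgroup: "subgroup (block_subgroup i) G"
    and block_shift_normalizer: "block_shift i \<in> normalizer G (block_subgroup i)"
    and block_shift_carrier: "block_shift i \<in> carrier G"
    and block_length_pos: "0 < block_length i"
    and block_sigma_pos: "0 < fst (block_sigma i)"
    and card_rcosets_block_subgroup:
      "card (rcosets (block_subgroup i)) = snd (block_sigma i) * fst (block_sigma i)"
    and block_shift_pow_mem_iff:
      "\<And>q. block_shift i [^] (q::nat) \<in> block_subgroup i \<longleftrightarrow> fst (block_sigma i) dvd q"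
proof -
  obtain C \<sigma> n j where i: "i = (C, \<sigma>, n, j)" and "C \<in> subgroup_classes" and "\<sigma> \<in> Sigma_class G C"
    and "1 \<le> n"
    using assms unfolding blocks_def by auto
  then have rep: "represents C \<sigma> (block_rep i)"
    unfolding block_rep_def block_sigma_def using Sigma_class_represented by simp
  show H: "subgroup (block_subgroup i) G" and c: "block_shift i \<in> normalizer G (block_subgroup i)"
    using rep unfolding represents_def by auto
  show "block_shift i \<in> carrier G"
    using c normalizer_subset_carrier by auto
  show "0 < block_length i"
    using i \<open>1 \<le> n\<close> unfolding block_length_def by simp
  have \<delta>: "fst (block_sigma i) = group.ord (weyl_group G (block_subgroup i)) (block_subgroup i #> block_shift i)"
    and \<theta>: "snd (block_sigma i) = subgroup_index G (block_subgroup i) div fst (block_sigma i)"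
    using rep i unfolding represents_def block_sigma_def by auto
  show "0 < fst (block_sigma i)"
    using weyl_ord(1)[OF finite_carrier H c] \<delta> by simp
  show "card (rcosets (block_subgroup i)) = snd (block_sigma i) * fst (block_sigma i)"
    using weyl_ord(2)[OF finite_carrier H c] \<delta> \<theta> unfolding subgroup_index_def by simp
  show "block_shift i [^] (q::nat) \<in> block_subgroup i \<longleftrightarrow> fst (block_sigma i) dvd q" for q
    using pow_mem_iff_weyl_ord_dvd[OF H c] \<delta> by simp
qed

definition points :: "'g point set" where
  "points = (SIGMA i:blocks. (rcosets (block_subgroup i)) \<times> {..<block_length i})"

definition shift :: "'g point \<Rightarrow> 'g point" where
  "shift = (\<lambda>(i, S, k). if Suc k < block_length i then (i, S, Suc k) else (i, block_shift i <# S, 0))"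

definition act :: "'g \<Rightarrow> 'g point \<Rightarrow> 'g point" where
  "act g = (\<lambda>(i, S, k). (i, S #> inv g, k))"

lemma mem_points:
  "(i, S, k) \<in> points \<longleftrightarrow> i \<in> blocks \<and> S \<in> rcosets (block_subgroup i) \<and> k < block_length i"
  unfolding points_def by simp

lemma shift_points: "shift ` points \<subseteq> points"
proof (rule image_subsetI)
  fix x assume "x \<in> points"
  then obtain i S k where x: "x = (i, S, k)" and i: "i \<in> blocks" and "S \<in> rcosets (block_subgroup i)"
    and "k < block_length i"
    unfolding points_def by auto
  then obtain g where g: "g \<in> carrier G" and S: "S = block_subgroup i #> g"
    unfolding RCOSETS_def by auto
  have "block_shift i <# S = block_subgroup i #> (block_shift i \<otimes> g)"
    using normalizer_l_coset_r_coset[OF subgroup_block_subgroup block_shift_normalizer] i g S by simp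
  then have "block_shift i <# S \<in> rcosets (block_subgroup i)"
    using rcosetsI subgroup.subset[OF subgroup_block_subgroup[OF i]] g block_shift_carrier[OF i] by simp
  then show "shift x \<in> points"
    using x i \<open>S \<in> _\<close> \<open>k < _\<close> block_length_pos[OF i] unfolding points_def shift_def by auto
qed

lemma funpow_shift:
  assumes "(i, S, k) \<in> points"
  shows "(shift ^^ p) (i, S, k)
    = (i, block_shift i [^] ((k + p) div block_length i) <# S, (k + p) mod block_length i)"
proof (induction p)
  have i: "i \<in> blocks" and "k < block_length i" and "S \<in> rcosets (block_subgroup i)"
    using assms unfolding points_def by auto
  then have S: "S \<subseteq> carrier G"
    using rcosets_subset_carrier subgroup_block_subgroup by blast
  case 0
  show ?case
    using S \<open>k < _\<close> by (simp add: lcos_mult_one)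
next
  have i: "i \<in> blocks" and "S \<in> rcosets (block_subgroup i)"
    using assms unfolding points_def by auto
  then have S: "S \<subseteq> carrier G"
    using rcosets_subset_carrier subgroup_block_subgroup by blast
  let ?n = "block_length i" and ?c = "block_shift i"
  have c: "?c \<in> carrier G"
    using block_shift_carrier[OF i] .
  case (Suc p)
  let ?q = "(k + p) div ?n" and ?r = "(k + p) mod ?n"
  show ?case
  proof (cases "Suc ?r < ?n")
    case True
    then have "(k + Suc p) mod ?n = Suc ?r" "(k + Suc p) div ?n = ?q"
      by (simp_all add: mod_Suc div_Suc)
    then show ?thesis
      using Suc True unfolding shift_def by simp
  next
    case False
    then have "Suc ?r = ?n"
      using block_length_pos[OF i] by (meson Suc_lessI mod_less_divisor)
    then have "(k + Suc p) mod ?n = 0" "(k + Suc p) div ?n = Suc ?q"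
      by (simp_all add: mod_Suc div_Suc)
    moreover have "?c <# (?c [^] ?q <# S) = ?c [^] Suc ?q <# S"
      using lcos_m_assoc[OF S c nat_pow_closed[OF c]] nat_pow_Suc2[OF c] by simp
    ultimately show ?thesis
      using Suc False unfolding shift_def by simp
  qed
qed

lemma funpow_shift_fixed_iff:
  assumes x: "(i, S, k) \<in> points"
  shows "(shift ^^ p) (i, S, k) = (i, S, k) \<longleftrightarrow> block_period i dvd p"
proof -
  let ?n = "block_length i" and ?\<delta> = "fst (block_sigma i)"
  have i: "i \<in> blocks" and k: "k < ?n" and "S \<in> rcosets (block_subgroup i)"
    using x unfolding points_def by auto
  then obtain g where g: "g \<in> carrier G" and S: "S = block_subgroup i #> g"
    unfolding RCOSETS_def by auto
  have n: "0 < ?n"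
    using block_length_pos[OF i] .
  have coset_fixed: "block_shift i [^] q <# S = S \<longleftrightarrow> ?\<delta> dvd q" for q :: nat
    using normalizer_l_coset_fixes_iff[OF subgroup_block_subgroup[OF i]
        normalizer_pow_closed[OF subgroup_block_subgroup[OF i] block_shift_normalizer[OF i]] g]
      S block_shift_pow_mem_iff[OF i] by simp
  have "(shift ^^ p) (i, S, k) = (i, S, k)
      \<longleftrightarrow> (k + p) mod ?n = k \<and> block_shift i [^] ((k + p) div ?n) <# S = S"
    using funpow_shift[OF x] by auto
  also have "\<dots> \<longleftrightarrow> ?n dvd p \<and> ?\<delta> dvd (k + p) div ?n"
    using mod_eq_dvd_iff_nat[of k "k + p" ?n] k coset_fixed by simp
  also have "\<dots> \<longleftrightarrow> ?n * ?\<delta> dvd p"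
    using k n by (auto elim!: dvdE simp: mult.assoc)
  finally show ?thesis .
qed

lemma prime_period_points_shift:
  assumes "0 < m"
  shows "prime_period_points shift points m
    = (SIGMA i:{i \<in> blocks. block_period i = m}. (rcosets (block_subgroup i)) \<times> {..<block_length i})"
proof (intro equalityI subsetI)
  fix x assume x: "x \<in> prime_period_points shift points m"
  obtain i S k where x_eq: "x = (i, S, k)"
    by (cases x)
  have "x \<in> points" and period: "\<And>p. (shift ^^ p) x = x \<longleftrightarrow> m dvd p"
    using x unfolding prime_period_points_def by simp_all
  then have "m dvd p \<longleftrightarrow> block_period i dvd p" for p
    using funpow_shift_fixed_iff[of i S k p] x_eq by simp
  then have "block_period i = m"
    using dvd_antisym dvd_refl by metis
  then show "x \<in> (SIGMA i:{i \<in> blocks. block_period i = m}. (rcosets (block_subgroup i)) \<times> {..<block_length i})"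
    using x_eq \<open>x \<in> points\<close> unfolding points_def by auto
next
  fix x assume "x \<in> (SIGMA i:{i \<in> blocks. block_period i = m}. (rcosets (block_subgroup i)) \<times> {..<block_length i})"
  then obtain i S k where "x = (i, S, k)" "x \<in> points" "block_period i = m"
    unfolding points_def by auto
  then show "x \<in> prime_period_points shift points m"
    unfolding prime_period_points_def using funpow_shift_fixed_iff by simp
qed

lemma sum_blocks:
  assumes "\<And>\<sigma>. finite (N \<sigma>)"
  shows "(\<Sum>i\<in>(SIGMA C:subgroup_classes. SIGMA \<sigma>:Sigma_class G C. SIGMA n:N \<sigma>. {..<b C \<sigma> n}). f (block_sigma i))
    = (\<Sum>C\<in>subgroup_classes. \<Sum>\<sigma>\<in>Sigma_class G C. \<Sum>n\<in>N \<sigma>. b C \<sigma> n * f \<sigma>)"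
proof -
  have "(\<Sum>i\<in>(SIGMA C:subgroup_classes. SIGMA \<sigma>:Sigma_class G C. SIGMA n:N \<sigma>. {..<b C \<sigma> n}). f (block_sigma i))
      = (\<Sum>C\<in>subgroup_classes. \<Sum>y\<in>(SIGMA \<sigma>:Sigma_class G C. SIGMA n:N \<sigma>. {..<b C \<sigma> n}). f (fst y))"
    unfolding block_sigma_def by (rule trans[OF sum_Sigma_pairs])
      (use assms finite_classes finite_Sigma_class in \<open>auto intro!: finite_SigmaI\<close>)
  also have "\<dots> = (\<Sum>C\<in>subgroup_classes. \<Sum>\<sigma>\<in>Sigma_class G C. \<Sum>z\<in>(SIGMA n:N \<sigma>. {..<b C \<sigma> n}). f \<sigma>)"
    by (intro sum.cong refl trans[OF sum_Sigma_pairs])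
      (use assms finite_Sigma_class in \<open>auto intro!: finite_SigmaI\<close>)
  also have "\<dots> = (\<Sum>C\<in>subgroup_classes. \<Sum>\<sigma>\<in>Sigma_class G C. \<Sum>n\<in>N \<sigma>. b C \<sigma> n * f \<sigma>)"
    using assms by (simp add: card_SigmaI sum_distrib_right)
  finally show ?thesis .
qed

lemma card_closed_orbits_shift:
  assumes "0 < m"
  shows "finite (closed_orbits shift points m)"
    and "card (closed_orbits shift points m) = (\<Sum>C\<in>subgroup_classes. \<Sum>\<sigma>\<in>Sigma_class G C.
         if fst \<sigma> dvd m then snd \<sigma> * b C \<sigma> (m div fst \<sigma>) else 0)"
proof -
  let ?N = "\<lambda>\<sigma>. {n. 1 \<le> n \<and> n * fst \<sigma> = m}"
  let ?B = "{i \<in> blocks. block_period i = m}"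
  have finite_N: "finite (?N \<sigma>)" for \<sigma>
  proof (rule finite_subset[of _ "{..m}"])
    show "?N \<sigma> \<subseteq> {..m}"
      using assms by (auto intro: dvd_imp_le)
  qed simp
  have B: "?B = (SIGMA C:subgroup_classes. SIGMA \<sigma>:Sigma_class G C. SIGMA n:?N \<sigma>. {..<b C \<sigma> n})"
    unfolding blocks_def block_length_def block_sigma_def by auto
  have "finite ?B"
    unfolding B using finite_classes finite_Sigma_class finite_N by (auto intro!: finite_SigmaI)
  then have finite_points: "finite (prime_period_points shift points m)"
    unfolding prime_period_points_shift[OF assms] unfolding RCOSETS_def using finite_carrier by auto
  then show "finite (closed_orbits shift points m)"
    using card_closed_orbits(1)[OF shift_points assms] by blast
  have "card (prime_period_points shift points m)
      = (\<Sum>i\<in>?B. card (rcosets (block_subgroup i)) * block_length i)"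
    unfolding prime_period_points_shift[OF assms] using \<open>finite ?B\<close> finite_carrier
    by (simp add: card_SigmaI card_cartesian_product RCOSETS_def)
  also have "\<dots> = m * (\<Sum>i\<in>?B. snd (block_sigma i))"
    unfolding sum_distrib_left by (rule sum.cong) (auto simp: card_rcosets_block_subgroup)
  finally have "card (closed_orbits shift points m) = (\<Sum>i\<in>?B. snd (block_sigma i))"
    using card_closed_orbits(2)[OF shift_points assms finite_points] assms by simp
  also have "\<dots> = (\<Sum>C\<in>subgroup_classes. \<Sum>\<sigma>\<in>Sigma_class G C. \<Sum>n\<in>?N \<sigma>. b C \<sigma> n * snd \<sigma>)"
    unfolding B by (rule sum_blocks[OF finite_N])
  also have "\<dots> = (\<Sum>C\<in>subgroup_classes. \<Sum>\<sigma>\<in>Sigma_class G C.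
         if fst \<sigma> dvd m then snd \<sigma> * b C \<sigma> (m div fst \<sigma>) else 0)"
  proof (intro sum.cong refl)
    fix \<sigma> C assume "\<sigma> \<in> Sigma_class G C"
    show "(\<Sum>n\<in>?N \<sigma>. b C \<sigma> n * snd \<sigma>) = (if fst \<sigma> dvd m then snd \<sigma> * b C \<sigma> (m div fst \<sigma>) else 0)"
    proof (cases "fst \<sigma> dvd m")
      case True
      then have "?N \<sigma> = {m div fst \<sigma>}"
        using assms by (auto elim!: dvdE)
      then show ?thesis
        using True by simp
    next
      case False
      then have "?N \<sigma> = {}"
        by auto
      then show ?thesis
        using False by (simp only: sum.empty if_False)
    qed
  qed
  finally show "card (closed_orbits shift points m) = (\<Sum>C\<in>subgroup_classes. \<Sum>\<sigma>\<in>Sigma_class G C.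
         if fst \<sigma> dvd m then snd \<sigma> * b C \<sigma> (m div fst \<sigma>) else 0)" .
qed

lemma bij_betw_shift: "bij_betw shift points points"
proof (rule bij_betw_periodic[OF shift_points])
  fix x assume "x \<in> points"
  then obtain i S k where x: "x = (i, S, k)" and "i \<in> blocks"
    unfolding points_def by auto
  then have "0 < block_period i" and "(shift ^^ block_period i) x = x"
    using block_length_pos block_sigma_pos funpow_shift_fixed_iff \<open>x \<in> points\<close> by simp_all
  then show "\<exists>p>0. (shift ^^ p) x = x"
    by blast
qed

lemma act_points:
  assumes "g \<in> carrier G" and "(i, S, k) \<in> points"
  shows "act g (i, S, k) \<in> points"
proof -
  have "S #> inv g \<in> rcosets (block_subgroup i)"
    using assms rcosets_right_translates[OF subgroup_block_subgroup] unfolding mem_points by blast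
  then show ?thesis
    using assms(2) by (simp add: mem_points act_def)
qed

lemma act_one:
  assumes "(i, S, k) \<in> points"
  shows "act \<one> (i, S, k) = (i, S, k)"
proof -
  have "S \<subseteq> carrier G"
    using assms rcosets_subset_carrier[OF subgroup_block_subgroup] unfolding mem_points by blast
  then show ?thesis
    unfolding act_def by simp
qed

lemma act_mult:
  assumes "g \<in> carrier G" and "h \<in> carrier G" and "(i, S, k) \<in> points"
  shows "act (g \<otimes> h) (i, S, k) = act g (act h (i, S, k))"
proof -
  have "S \<subseteq> carrier G"
    using assms(3) rcosets_subset_carrier[OF subgroup_block_subgroup] unfolding mem_points by blast
  then show ?thesis
    using assms(1,2) unfolding act_def by (simp add: coset_mult_assoc inv_mult_group)
qed

lemma act_shift:
  assumes "g \<in> carrier G" and "(i, S, k) \<in> points"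
  shows "act g (shift (i, S, k)) = shift (act g (i, S, k))"
proof -
  have "S \<subseteq> carrier G" and "block_shift i \<in> carrier G"
    using assms(2) rcosets_subset_carrier[OF subgroup_block_subgroup] block_shift_carrier
    unfolding mem_points by blast+
  then show ?thesis
    using assms(1) unfolding act_def shift_def by (simp add: coset_assoc)
qed

lemma orbit_act:
  assumes "(i, S, k) \<in> points"
  shows "orbit G act (i, S, k) = (\<lambda>S. (i, S, k)) ` (rcosets (block_subgroup i))"
proof -
  have "orbit G act (i, S, k) = (\<lambda>S. (i, S, k)) ` (\<lambda>g. S #> inv g) ` carrier G"
    unfolding orbit_def act_def by auto
  also have "(\<lambda>g. S #> inv g) ` carrier G = rcosets (block_subgroup i)"
    using assms rcosets_right_translates[OF subgroup_block_subgroup] unfolding mem_points by blast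
  finally show ?thesis .
qed

definition labels :: "('g block \<times> nat) set" where
  "labels = (SIGMA i:blocks. {..<block_length i})"

definition label_shift :: "'g block \<times> nat \<Rightarrow> 'g block \<times> nat" where
  "label_shift = (\<lambda>(i, k). (i, Suc k mod block_length i))"

lemma label_shift_labels: "label_shift ` labels \<subseteq> labels"
  unfolding label_shift_def labels_def using block_length_pos by auto

lemma mem_labels: "(i, k) \<in> labels \<longleftrightarrow> i \<in> blocks \<and> k < block_length i"
  unfolding labels_def by simp

lemma funpow_label_shift: "(i, k) \<in> labels \<Longrightarrow> (label_shift ^^ p) (i, k) = (i, (k + p) mod block_length i)"
  by (induction p) (simp_all add: mem_labels label_shift_def mod_Suc_eq)

lemma funpow_label_shift_fixed_iff:
  assumes "(i, k) \<in> labels"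
  shows "(label_shift ^^ p) (i, k) = (i, k) \<longleftrightarrow> block_length i dvd p"
proof -
  have "(label_shift ^^ p) (i, k) = (i, k) \<longleftrightarrow> (k + p) mod block_length i = k mod block_length i"
    using funpow_label_shift[OF assms] assms by (simp add: mem_labels)
  also have "\<dots> \<longleftrightarrow> block_length i dvd p"
    by (simp add: mod_eq_dvd_iff_nat)
  finally show ?thesis .
qed

lemma prime_period_points_label_shift:
  assumes "0 < m"
  shows "prime_period_points label_shift labels m = (SIGMA i:{i \<in> blocks. block_length i = m}. {..<block_length i})"
proof (intro equalityI subsetI)
  fix x :: "'g block \<times> nat"
  obtain i k where x: "x = (i, k)"
    by (cases x)
  {
    assume "x \<in> prime_period_points label_shift labels m"
    then have label: "(i, k) \<in> labels" and period: "\<And>p. (label_shift ^^ p) (i, k) = (i, k) \<longleftrightarrow> m dvd p"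
      unfolding x prime_period_points_def by simp_all
    have "block_length i dvd m" and "m dvd block_length i"
      using period[of m] period[of "block_length i"] funpow_label_shift_fixed_iff[OF label] by simp_all
    then have "block_length i = m"
      by (rule dvd_antisym)
    then show "x \<in> (SIGMA i:{i \<in> blocks. block_length i = m}. {..<block_length i})"
      using label unfolding x mem_labels by simp
  next
    assume "x \<in> (SIGMA i:{i \<in> blocks. block_length i = m}. {..<block_length i})"
    then have label: "(i, k) \<in> labels" and "block_length i = m"
      unfolding x mem_labels by simp_all
    then show "x \<in> prime_period_points label_shift labels m"
      unfolding x prime_period_points_def using funpow_label_shift_fixed_iff by simp
  }
qed

lemma card_closed_orbits_label_shift:
  assumes "0 < m"
  shows "finite (closed_orbits label_shift labels m)"
    and "card (closed_orbits label_shift labels m) = (\<Sum>C\<in>subgroup_classes. \<Sum>\<sigma>\<in>Sigma_class G C. b C \<sigma> m)"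
proof -
  let ?B = "{i \<in> blocks. block_length i = m}"
  have B: "?B = (SIGMA C:subgroup_classes. SIGMA \<sigma>:Sigma_class G C. SIGMA n:{m}. {..<b C \<sigma> n})"
    unfolding blocks_def block_length_def using assms by auto
  have "finite ?B"
    unfolding B using finite_classes finite_Sigma_class by (auto intro!: finite_SigmaI)
  then have finite_points: "finite (prime_period_points label_shift labels m)"
    unfolding prime_period_points_label_shift[OF assms] by auto
  then show "finite (closed_orbits label_shift labels m)"
    using card_closed_orbits(1)[OF label_shift_labels assms] by blast
  have "card (prime_period_points label_shift labels m) = m * (\<Sum>i\<in>?B. 1)"
    unfolding prime_period_points_label_shift[OF assms] using \<open>finite ?B\<close>
    by (simp add: card_SigmaI)
  then have "card (closed_orbits label_shift labels m) = (\<Sum>i\<in>?B. 1)"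
    using card_closed_orbits(2)[OF label_shift_labels assms finite_points] assms by simp
  also have "\<dots> = (\<Sum>C\<in>subgroup_classes. \<Sum>\<sigma>\<in>Sigma_class G C. b C \<sigma> m)"
    unfolding B using sum_blocks[of "\<lambda>_. {m}" "\<lambda>_. 1"] by simp
  finally show "card (closed_orbits label_shift labels m) = (\<Sum>C\<in>subgroup_classes. \<Sum>\<sigma>\<in>Sigma_class G C. b C \<sigma> m)" .
qed

definition top_block :: "'g block" where
  "top_block = (subgroup_conj_class G (carrier G), (1, 1), 1, 0)"

lemma top_block_blocks: "top_block \<in> blocks"
proof -
  interpret N: normal "carrier G" "G\<lparr>carrier := normalizer G (carrier G)\<rparr>"
    using subgroup_in_normalizer[OF subgroup_self] .
  interpret W: group "weyl_group G (carrier G)"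
    using N.factorgroup_is_group .
  have "1 \<in> elem_orders (weyl_group G (carrier G))"
    unfolding elem_orders_def
    by (intro CollectI exI[of _ "\<one>\<^bsub>weyl_group G (carrier G)\<^esub>"]) (simp only: W.ord_id W.one_closed simp_thms)
  moreover have "subgroup_index G (carrier G) = 1"
    unfolding subgroup_index_def rcosets_carrier by simp
  ultimately have "(1, 1) \<in> Sigma_class G (subgroup_conj_class G (carrier G))"
    unfolding Sigma_class_def subgroup_conj_class_carrier
    by (intro CollectI exI[of _ 1] exI[of _ "carrier G"]) simp
  moreover have "subgroup_conj_class G (carrier G) \<in> subgroup_classes"
    unfolding conj_classes_subgroups_def using subgroup_self by auto
  ultimately show ?thesis
    unfolding top_block_def blocks_def using fixed_point_count by auto
qed

lemma block_subgroup_top: "block_subgroup top_block = carrier G"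
proof -
  have "subgroup_conj_class G (carrier G) \<in> subgroup_classes"
    unfolding conj_classes_subgroups_def using subgroup_self by auto
  then have "represents (subgroup_conj_class G (carrier G)) (1, 1) (block_rep top_block)"
    using top_block_blocks Sigma_class_represented
    unfolding block_rep_def block_sigma_def top_block_def blocks_def by auto
  then show ?thesis
    unfolding represents_def subgroup_conj_class_carrier by simp
qed

lemma block_length_top: "block_length top_block = 1"
  unfolding block_length_def top_block_def by simp

definition weight :: "'g point \<Rightarrow> real" where
  "weight x = (if fst x = top_block then 0 else 1 / (real (block_length (fst x)) + 1))"

lemma weight_nonneg: "0 \<le> weight x"
  unfolding weight_def by simp

lemma weight_shift: "weight (shift x) = weight x"
  unfolding weight_def shift_def by (simp add: split_beta)

lemma weight_act: "weight (act g x) = weight x"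
  unfolding weight_def act_def by (simp add: split_beta)

lemma top_point_points: "(top_block, carrier G, 0) \<in> points"
  using top_block_blocks rcosets_carrier block_length_top unfolding mem_points block_subgroup_top by simp

lemma weight_eq_0_iff:
  assumes "x \<in> points"
  shows "weight x = 0 \<longleftrightarrow> x = (top_block, carrier G, 0)"
proof -
  obtain i S k where x: "x = (i, S, k)"
    by (cases x)
  have "weight x = 0 \<longleftrightarrow> i = top_block"
    unfolding x weight_def by simp
  also have "\<dots> \<longleftrightarrow> x = (top_block, carrier G, 0)"
  proof
    assume "i = top_block"
    then show "x = (top_block, carrier G, 0)"
      using assms rcosets_carrier block_length_top block_subgroup_top unfolding x mem_points by simp
  qed (simp add: x)
  finally show ?thesis .
qed

lemma finite_heavy_points:
  assumes "0 < e"
  shows "finite {x \<in> points. e \<le> weight x}"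
proof -
  define N where "N = nat \<lceil>1 / e\<rceil>"
  let ?B = "SIGMA C:subgroup_classes. SIGMA \<sigma>:Sigma_class G C. SIGMA n:{..N}. {..<b C \<sigma> n}"
  have "finite ?B"
    using finite_classes finite_Sigma_class by (auto intro!: finite_SigmaI)
  have bound: "block_length i \<le> N" if "i \<noteq> top_block" and "e \<le> 1 / (real (block_length i) + 1)" for i
  proof -
    have "real (block_length i) + 1 \<le> 1 / e"
      using that(2) assms by (simp add: field_simps)
    then show ?thesis
      unfolding N_def by linarith
  qed
  then have heavy: "x \<in> (SIGMA i:?B. (rcosets (block_subgroup i)) \<times> {..<block_length i})"
    if "x \<in> points" and "e \<le> weight x" for x
  proof -
    obtain i S k where x: "x = (i, S, k)"
      by (cases x)
    have i: "i \<in> blocks" "S \<in> rcosets (block_subgroup i)" "k < block_length i"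
      using that(1) unfolding x mem_points by simp_all
    have "i \<noteq> top_block"
      using that(2) assms unfolding x weight_def by auto
    then have "block_length i \<le> N"
      using that(2) bound unfolding x weight_def by simp
    then have "i \<in> ?B"
      using i(1) unfolding blocks_def block_length_def by auto
    then show ?thesis
      using i unfolding x by simp
  qed
  then have "{x \<in> points. e \<le> weight x} \<subseteq> (SIGMA i:?B. (rcosets (block_subgroup i)) \<times> {..<block_length i})"
    by blast
  moreover have "finite (SIGMA i:?B. (rcosets (block_subgroup i)) \<times> {..<block_length i})"
    using \<open>finite ?B\<close> finite_carrier unfolding RCOSETS_def by (auto intro!: finite_SigmaI)
  ultimately show ?thesis
    by (rule finite_subset)
qed

subsection \<open>Embedding into the reals\<close>

lemma countable_points: "countable points"
proof -
  have "countable blocks"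
    unfolding blocks_def using finite_classes finite_Sigma_class
    by (intro countable_SIGMA) (auto intro: countable_finite countableI_type)
  then show ?thesis
    unfolding points_def using finite_carrier unfolding RCOSETS_def
    by (intro countable_SIGMA) (auto intro: countable_finite)
qed

definition embed :: "'g point \<Rightarrow> real" where
  "embed x = real (to_nat_on points x)"

definition decode :: "real \<Rightarrow> 'g point" where
  "decode = inv_into points embed"

abbreviation X_real :: "real set" where
  "X_real \<equiv> embed ` points"

definition T_real :: "real \<Rightarrow> real" where
  "T_real x = embed (shift (decode x))"

definition \<phi>_real :: "'g \<Rightarrow> real \<Rightarrow> real" where
  "\<phi>_real g = (\<lambda>x\<in>X_real. embed (act g (decode x)))"

definition weight_real :: "real \<Rightarrow> real" where
  "weight_real x = weight (decode x)"

lemma bij_betw_embed: "bij_betw embed points X_real"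
  using inj_on_to_nat_on[OF countable_points] unfolding bij_betw_def inj_on_def embed_def by simp

lemma decode_embed [simp]: "x \<in> points \<Longrightarrow> decode (embed x) = x"
  unfolding decode_def using bij_betw_embed bij_betw_inv_into_left by fast

lemma T_real_embed: "x \<in> points \<Longrightarrow> T_real (embed x) = embed (shift x)"
  unfolding T_real_def by simp

lemma \<phi>_real_embed: "x \<in> points \<Longrightarrow> \<phi>_real g (embed x) = embed (act g x)"
  unfolding \<phi>_real_def by simp

lemma weight_real_embed: "x \<in> points \<Longrightarrow> weight_real (embed x) = weight x"
  unfolding weight_real_def by simp

lemma Metric_space_X_real: "Metric_space X_real (weight_dist weight_real)"
proof (rule Metric_space_weight_dist)
  show "0 \<le> weight_real y" for y
    unfolding weight_real_def by (rule weight_nonneg)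
  fix y z assume "y \<in> X_real" "z \<in> X_real" "weight_real y = 0" "weight_real z = 0"
  then show "y = z"
    using weight_eq_0_iff by (auto simp: weight_real_embed)
qed

lemma compact_space_X_real: "compact_space (Metric_space.mtopology X_real (weight_dist weight_real))"
proof (rule compact_space_weight_dist[OF Metric_space_X_real])
  show "0 \<le> weight_real y" for y
    unfolding weight_real_def by (rule weight_nonneg)
  show "embed (top_block, carrier G, 0) \<in> X_real"
    using top_point_points by simp
  show "weight_real (embed (top_block, carrier G, 0)) = 0"
    using top_point_points weight_eq_0_iff by (simp add: weight_real_embed)
  fix e :: real assume "0 < e"
  have "{y \<in> X_real. e \<le> weight_real y} = embed ` {x \<in> points. e \<le> weight x}"
    by (auto simp: weight_real_embed)
  then show "finite {y \<in> X_real. e \<le> weight_real y}"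
    using finite_heavy_points[OF \<open>0 < e\<close>] by simp
qed

lemma homeomorphic_map_T_real:
  "homeomorphic_map (Metric_space.mtopology X_real (weight_dist weight_real))
    (Metric_space.mtopology X_real (weight_dist weight_real)) T_real"
proof (rule homeomorphic_map_weight_dist[OF Metric_space_X_real])
  have "bij_betw (embed \<circ> (shift \<circ> decode)) X_real X_real"
    using bij_betw_trans[OF bij_betw_trans[OF bij_betw_inv_into[OF bij_betw_embed] bij_betw_shift] bij_betw_embed]
    unfolding decode_def .
  then show "bij_betw T_real X_real X_real"
    unfolding T_real_def[abs_def] comp_def .
  show "weight_real (T_real y) = weight_real y" if "y \<in> X_real" for y
    using that shift_points by (auto simp: T_real_embed weight_real_embed weight_shift)
qed

lemma group_action_\<phi>_real: "group_action G X_real \<phi>_real"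
proof (rule group_action_intro)
  show "\<phi>_real g y \<in> X_real" if "g \<in> carrier G" "y \<in> X_real" for g y
    using that act_points by (auto simp: \<phi>_real_embed)
  show "\<phi>_real g \<in> extensional X_real" for g
    unfolding \<phi>_real_def by simp
  show "\<phi>_real \<one> y = y" if "y \<in> X_real" for y
    using that act_one by (auto simp: \<phi>_real_embed)
  show "\<phi>_real (g \<otimes> h) y = \<phi>_real g (\<phi>_real h y)" if "g \<in> carrier G" "h \<in> carrier G" "y \<in> X_real" for g h y
    using that act_points act_mult by (auto simp: \<phi>_real_embed)
qed

lemma continuous_map_\<phi>_real:
  assumes "g \<in> carrier G"
  shows "continuous_map (Metric_space.mtopology X_real (weight_dist weight_real))
    (Metric_space.mtopology X_real (weight_dist weight_real)) (\<phi>_real g)"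
  by (rule continuous_map_weight_dist[OF Metric_space_X_real])
    (use assms act_points in \<open>auto simp: \<phi>_real_embed weight_real_embed weight_act\<close>)

lemma \<phi>_real_T_real: "g \<in> carrier G \<Longrightarrow> y \<in> X_real \<Longrightarrow> \<phi>_real g (T_real y) = T_real (\<phi>_real g y)"
  using act_points shift_points act_shift by (auto simp: \<phi>_real_embed T_real_embed)

lemma card_closed_orbits_T_real:
  assumes "0 < m"
  shows "finite (closed_orbits T_real X_real m)"
    and "card (closed_orbits T_real X_real m) = (\<Sum>C\<in>subgroup_classes. \<Sum>\<sigma>\<in>Sigma_class G C.
         if fst \<sigma> dvd m then snd \<sigma> * b C \<sigma> (m div fst \<sigma>) else 0)"
  using closed_orbits_conj[OF bij_betw_embed shift_points T_real_embed, of m]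
    card_closed_orbits_conj[OF bij_betw_embed shift_points T_real_embed, of m] card_closed_orbits_shift[OF assms]
  by simp_all

definition label_orbit :: "'g block \<times> nat \<Rightarrow> real set" where
  "label_orbit = (\<lambda>(i, k). embed ` (\<lambda>S. (i, S, k)) ` (rcosets (block_subgroup i)))"

lemma orbit_\<phi>_real_embed:
  assumes "(i, S, k) \<in> points"
  shows "orbit G \<phi>_real (embed (i, S, k)) = label_orbit (i, k)"
proof -
  have "orbit G \<phi>_real (embed (i, S, k)) = embed ` orbit G act (i, S, k)"
    unfolding orbit_def Setcompr_eq_image image_image using assms by (simp add: \<phi>_real_embed)
  then show ?thesis
    unfolding label_orbit_def using orbit_act[OF assms] by simp
qed

lemma base_point_points:
  assumes "(i, k) \<in> labels"
  shows "(i, block_subgroup i, k) \<in> points"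
proof -
  have "block_subgroup i #> \<one> \<in> rcosets (block_subgroup i)"
    using assms rcosetsI subgroup.subset[OF subgroup_block_subgroup] unfolding mem_labels by blast
  then show ?thesis
    using assms subgroup.subset[OF subgroup_block_subgroup] unfolding mem_labels mem_points by simp
qed

lemma bij_betw_label_orbit: "bij_betw label_orbit labels (orbits G X_real \<phi>_real)"
proof (rule bij_betw_imageI)
  show "inj_on label_orbit labels"
  proof (rule inj_onI)
    fix j j' assume j: "j \<in> labels" and j': "j' \<in> labels" and eq: "label_orbit j = label_orbit j'"
    obtain i k i' k' where ik: "j = (i, k)" "j' = (i', k')"
      by (cases j, cases j')
    have "embed (i, block_subgroup i, k) \<in> label_orbit j"
      using base_point_points[OF j[unfolded ik]] unfolding ik label_orbit_def mem_points by blast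
    then have "embed (i, block_subgroup i, k) \<in> label_orbit j'"
      using eq by simp
    then obtain S' where "S' \<in> rcosets (block_subgroup i')"
      and same: "embed (i, block_subgroup i, k) = embed (i', S', k')"
      unfolding ik label_orbit_def by blast
    then have "(i', S', k') \<in> points"
      using j' unfolding ik mem_labels mem_points by simp
    moreover have "inj_on embed points"
      using bij_betw_embed by (simp add: bij_betw_def)
    ultimately have "(i, block_subgroup i, k) = (i', S', k')"
      using inj_onD[OF _ same base_point_points[OF j[unfolded ik]]] by blast
    then show "j = j'"
      unfolding ik by simp
  qed
  show "label_orbit ` labels = orbits G X_real \<phi>_real"
  proof (intro equalityI subsetI)
    fix Orb assume "Orb \<in> label_orbit ` labels"
    then obtain i k where "(i, k) \<in> labels" and "Orb = label_orbit (i, k)"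
      by auto
    then have "Orb = orbit G \<phi>_real (embed (i, block_subgroup i, k))"
      and "embed (i, block_subgroup i, k) \<in> X_real"
      using orbit_\<phi>_real_embed base_point_points by simp_all
    then show "Orb \<in> orbits G X_real \<phi>_real"
      unfolding orbits_def by blast
  next
    fix Orb assume "Orb \<in> orbits G X_real \<phi>_real"
    then obtain x where "x \<in> points" and "Orb = orbit G \<phi>_real (embed x)"
      unfolding orbits_def by auto
    moreover obtain i S k where "x = (i, S, k)"
      by (cases x)
    ultimately have point: "(i, S, k) \<in> points" and "Orb = orbit G \<phi>_real (embed (i, S, k))"
      by simp_all
    then have "Orb = label_orbit (i, k)" and "(i, k) \<in> labels"
      using orbit_\<phi>_real_embed[OF point] by (simp_all add: mem_points mem_labels)
    then show "Orb \<in> label_orbit ` labels"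
      by simp
  qed
qed

lemma quotient_map_label_orbit:
  assumes "(i, k) \<in> labels"
  shows "quotient_map G \<phi>_real T_real (label_orbit (i, k)) = label_orbit (label_shift (i, k))"
proof -
  have base: "(i, block_subgroup i, k) \<in> points"
    using base_point_points[OF assms] .
  obtain S' where shifted: "shift (i, block_subgroup i, k) = (i, S', Suc k mod block_length i)"
  proof (cases "Suc k < block_length i")
    case True
    show ?thesis
      by (rule that) (simp add: shift_def True)
  next
    case False
    then have "Suc k = block_length i"
      using assms by (simp add: mem_labels)
    show ?thesis
      by (rule that) (simp add: shift_def \<open>Suc k = block_length i\<close>)
  qed
  have "quotient_map G \<phi>_real T_real (label_orbit (i, k)) = orbit G \<phi>_real (T_real (embed (i, block_subgroup i, k)))"
    unfolding orbit_\<phi>_real_embed[OF base, symmetric]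
  proof (rule group_action.quotient_map_orbit[OF group_action_\<phi>_real])
    show "T_real y \<in> X_real" if "y \<in> X_real" for y
      using that shift_points by (auto simp: T_real_embed)
  qed (use base \<phi>_real_T_real in simp_all)
  also have "\<dots> = orbit G \<phi>_real (embed (i, S', Suc k mod block_length i))"
    using base shifted by (simp add: T_real_embed)
  also have "\<dots> = label_orbit (label_shift (i, k))"
  proof -
    have "(i, S', Suc k mod block_length i) \<in> points"
      using shift_points base unfolding shifted[symmetric] by blast
    then show ?thesis
      unfolding label_shift_def by (simp add: orbit_\<phi>_real_embed)
  qed
  finally show ?thesis .
qed

lemma card_closed_orbits_quotient:
  assumes "0 < m"
  shows "finite (closed_orbits (quotient_map G \<phi>_real T_real) (orbits G X_real \<phi>_real) m)"
    and "card (closed_orbits (quotient_map G \<phi>_real T_real) (orbits G X_real \<phi>_real) m)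
      = (\<Sum>C\<in>subgroup_classes. \<Sum>\<sigma>\<in>Sigma_class G C. b C \<sigma> m)"
proof -
  have conj: "quotient_map G \<phi>_real T_real (label_orbit j) = label_orbit (label_shift j)" if "j \<in> labels" for j
    using that quotient_map_label_orbit by (cases j) simp
  show "finite (closed_orbits (quotient_map G \<phi>_real T_real) (orbits G X_real \<phi>_real) m)"
    using closed_orbits_conj[OF bij_betw_label_orbit label_shift_labels conj]
      card_closed_orbits_label_shift(1)[OF assms] by simp
  show "card (closed_orbits (quotient_map G \<phi>_real T_real) (orbits G X_real \<phi>_real) m)
      = (\<Sum>C\<in>subgroup_classes. \<Sum>\<sigma>\<in>Sigma_class G C. b C \<sigma> m)"
    using card_closed_orbits_conj[OF bij_betw_label_orbit label_shift_labels conj]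
      card_closed_orbits_label_shift(2)[OF assms] by simp
qed

end

theorem proposition10:
  fixes G :: "('g, 'b) monoid_scheme"
    and b :: "'g set set \<Rightarrow> nat \<times> nat \<Rightarrow> nat \<Rightarrow> nat"
    and a_sig :: "'g set set \<Rightarrow> nat \<times> nat \<Rightarrow> nat \<Rightarrow> nat"
    and a_tot b_tot :: "nat \<Rightarrow> nat"
  assumes "group G" and "finite (carrier G)"
    and "b (subgroup_conj_class G (carrier G)) (1, 1) 1 \<ge> 1"
    and "\<And>C \<sigma> n. a_sig C \<sigma> n = (if fst \<sigma> dvd n then snd \<sigma> * b C \<sigma> (n div fst \<sigma>) else 0)"
    and "\<And>n. n \<ge> 1 \<Longrightarrow> a_tot n = (\<Sum>C\<in>conj_classes_subgroups G. \<Sum>\<sigma>\<in>Sigma_class G C. a_sig C \<sigma> n)"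
    and "\<And>n. n \<ge> 1 \<Longrightarrow> b_tot n = (\<Sum>C\<in>conj_classes_subgroups G. \<Sum>\<sigma>\<in>Sigma_class G C. b C \<sigma> n)"
  shows "\<exists>(X :: real set) (d :: real \<Rightarrow> real \<Rightarrow> real) (T :: real \<Rightarrow> real) (\<phi> :: 'g \<Rightarrow> real \<Rightarrow> real).
           Metric_space X d \<and>
           compact_space (Metric_space.mtopology X d) \<and>
           homeomorphic_map (Metric_space.mtopology X d) (Metric_space.mtopology X d) T \<and>
           group_action G X \<phi> \<and>
           (\<forall>g\<in>carrier G. continuous_map (Metric_space.mtopology X d) (Metric_space.mtopology X d) (\<phi> g)) \<and>
           (\<forall>g\<in>carrier G. \<forall>x\<in>X. \<phi> g (T x) = T (\<phi> g x)) \<and>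
           (\<forall>n\<ge>1. finite (closed_orbits T X n) \<and> card (closed_orbits T X n) = a_tot n) \<and>
           (\<forall>n\<ge>1. finite (closed_orbits (quotient_map G \<phi> T) (orbits G X \<phi>) n) \<and>
                   card (closed_orbits (quotient_map G \<phi> T) (orbits G X \<phi>) n) = b_tot n)"
proof -
  interpret periodic_realization G b
    using assms(1-3) by (simp add: periodic_realization_def periodic_realization_axioms_def)
  have a_tot: "a_tot n = card (closed_orbits T_real X_real n)" if "1 \<le> n" for n
    using that assms(4,5) card_closed_orbits_T_real(2)[of n] by simp
  have b_tot: "b_tot n = card (closed_orbits (quotient_map G \<phi>_real T_real) (orbits G X_real \<phi>_real) n)"
    if "1 \<le> n" for n
    using that assms(6) card_closed_orbits_quotient(2)[of n] by simp
  show ?thesis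
  proof (intro exI[of _ X_real] exI[of _ "weight_dist weight_real"] exI[of _ T_real] exI[of _ \<phi>_real]
      conjI ballI allI impI)
    fix n :: nat assume "1 \<le> n"
    then show "finite (closed_orbits T_real X_real n)" "card (closed_orbits T_real X_real n) = a_tot n"
      and "finite (closed_orbits (quotient_map G \<phi>_real T_real) (orbits G X_real \<phi>_real) n)"
      and "card (closed_orbits (quotient_map G \<phi>_real T_real) (orbits G X_real \<phi>_real) n) = b_tot n"
      using a_tot b_tot card_closed_orbits_T_real(1) card_closed_orbits_quotient(1) by simp_all
  qed (simp_all add: Metric_space_X_real compact_space_X_real homeomorphic_map_T_real group_action_\<phi>_real
      continuous_map_\<phi>_real \<phi>_real_T_real)
qed

end
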